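(* There is an absolute constant $c>0$ such that for all finite nonempty sets $\mathcal{A},\mathcal{B},\mathcal{C}$ of nonzero complex numbers, $$|\mathcal{A}\mathcal{C}+\mathcal{A}\mathcal{C}|\,|\mathcal{B}\mathcal{C}+\mathcal{B}\mathcal{C}|\geq c\,|\mathcal{A}/\mathcal{B}|\,|\mathcal{C}|^2.$$
   Context: For finite sets $X,Y\subset\mathbb{C}$, $X+Y:=\{x+y:x\in X,y\in Y\}$, $XY:=\{xy:x\in X,y\in Y\}$, and for $0\notin Y$, $X/Y:=\{x/y:x\in X,y\in Y\}$. *)

theory Defs
  imports Complex_Main
begin

definition sumset :: "complex set \<Rightarrow> complex set \<Rightarrow> complex set" where
  "sumset X Y = {x + y | x y. x \<in> X \<and> y \<in> Y}"

definition prodset :: "complex set \<Rightarrow> complex set \<Rightarrow> complex set" where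
  "prodset X Y = {x * y | x y. x \<in> X \<and> y \<in> Y}"

definition quotset :: "complex set \<Rightarrow> complex set \<Rightarrow> complex set" where
  "quotset X Y = {x / y | x y. x \<in> X \<and> y \<in> Y}"

end

theory Submission
  imports Defs
begin

text \<open>
  Let \<open>L = A/B\<close>. Choose for every \<open>l \<in> L\<close> a representation \<open>l = a\<^sub>l / b\<^sub>l\<close> and a
  nearest neighbour \<open>m\<close> of \<open>l\<close> in \<open>L - {l}\<close>, and map \<open>(l, c, c')\<close> to
  \<open>(b\<^sub>l c + b\<^sub>m c', a\<^sub>l c + a\<^sub>m c') \<in> (BC + BC) \<times> (AC + AC)\<close>.
  For fixed \<open>l\<close> this map is injective because \<open>l \<noteq> m\<close>. Suppose any two elements of \<open>BC\<close>
  form an acute angle. An image point \<open>(X, Y)\<close> then satisfies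
  \<open>Y/X = l + (m - l) z\<^sub>2 / (z\<^sub>1 + z\<^sub>2)\<close> with \<open>|z\<^sub>2| < |z\<^sub>1 + z\<^sub>2|\<close>, so \<open>Y/X\<close> is closer
  to \<open>l\<close> than the nearest neighbour of \<open>l\<close> is. A point is that close to at most ten points of
  \<open>L\<close>: two of them seen from it in the same sector of width \<open>\<pi>/4\<close> would be closer to each
  other. Hence all fibres have at most ten elements and
  \<open>|A/B| |C|\<^sup>2 \<le> 10 |AC + AC| |BC + BC|\<close>. In general, pigeonholing \<open>B\<close> and \<open>C\<close> into the
  nine angular sectors of width \<open>\<pi>/4\<close> reduces to this case at the cost of a factor \<open>9\<^sup>3\<close>.
\<close>

lemma pigeonhole_card_UN:
  assumes "finite I" "I \<noteq> {}" "X \<subseteq> (\<Union>i\<in>I. G i)" "\<And>i. i \<in> I \<Longrightarrow> finite (G i)"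
  shows "\<exists>i\<in>I. card X \<le> card I * card (G i)"
proof -
  have "Max ((\<lambda>j. card (G j)) ` I) \<in> (\<lambda>j. card (G j)) ` I"
    using assms(1,2) by (intro Max_in) auto
  then obtain i where i: "i \<in> I" "card (G i) = Max ((\<lambda>j. card (G j)) ` I)"
    by auto
  then have le: "card (G j) \<le> card (G i)" if "j \<in> I" for j
    using assms(1) that by simp
  have "card X \<le> card (\<Union>i\<in>I. G i)" using assms by (intro card_mono) auto
  also have "\<dots> \<le> (\<Sum>j\<in>I. card (G j))" using assms(1) by (rule card_UN_le)
  also have "\<dots> \<le> card I * card (G i)" using sum_bounded_above[of I, OF le] by simp
  finally show ?thesis using i(1) by blast
qed

lemma card_le_mult_card_image:
  assumes "finite D" "\<And>y. card {x \<in> D. f x = y} \<le> k"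
  shows "card D \<le> k * card (f ` D)"
proof -
  have "card D = card (\<Union>y\<in>f ` D. {x \<in> D. f x = y})" by (rule arg_cong[of _ _ card]) auto
  also have "\<dots> \<le> (\<Sum>y\<in>f ` D. card {x \<in> D. f x = y})"
    using assms(1) by (intro card_UN_le) simp
  also have "\<dots> \<le> k * card (f ` D)"
    using sum_bounded_above[of "f ` D" _ k] assms(2) by (simp add: mult.commute)
  finally show ?thesis .
qed

lemma finite_nearest_neighbour:
  fixes L :: "'a::metric_space set"
  assumes "finite L" "2 \<le> card L"
  obtains N where "\<And>l. l \<in> L \<Longrightarrow> N l \<in> L - {l}"
    "\<And>l l'. l \<in> L \<Longrightarrow> l' \<in> L - {l} \<Longrightarrow> dist l (N l) \<le> dist l l'"
proof -
  have "L - {l} \<noteq> {}" for l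
  proof
    assume "L - {l} = {}"
    then have "card L \<le> card {l}" by (intro card_mono) auto
    then show False using assms(2) by simp
  qed
  then have "\<forall>l\<in>L. \<exists>m. is_arg_min (dist l) (\<lambda>m. m \<in> L - {l}) m"
    using assms(1) by (blast intro: ex_is_arg_min_if_finite)
  then obtain N where "\<forall>l\<in>L. is_arg_min (dist l) (\<lambda>m. m \<in> L - {l}) (N l)"
    by metis
  then show ?thesis
    by - (rule that; auto simp: is_arg_min_linorder)
qed

lemma cmod_add_square: "(cmod (z + w))\<^sup>2 = (cmod z)\<^sup>2 + (cmod w)\<^sup>2 + 2 * Re (z * cnj w)"
  unfolding cmod_power2 by (simp add: power2_eq_square algebra_simps)

lemma mult_cnj_eq_rcis: "z * cnj w = rcis (cmod z * cmod w) (Arg z - Arg w)"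
proof -
  have "z * cnj w = rcis (cmod z) (Arg z) * rcis (cmod w) (- Arg w)"
    by (simp add: rcis_cmod_Arg rcis_cnj[symmetric])
  then show ?thesis by (simp add: rcis_mult)
qed

lemma norm_less_norm_add:
  assumes "Re (z * cnj w) > 0"
  shows "cmod w < cmod (z + w)"
proof (rule power2_less_imp_less)
  show "(cmod w)\<^sup>2 < (cmod (z + w))\<^sup>2"
    using assms cmod_add_square[of z w] by (simp add: add_nonneg_pos)
qed simp

lemma norm_diff_less_max_norm:
  assumes "z \<noteq> 0" "w \<noteq> 0" "\<bar>Arg z - Arg w\<bar> < pi / 3"
  shows "cmod (z - w) < max (cmod z) (cmod w)"
proof (rule power2_less_imp_less)
  have "cos (pi / 3) < cos \<bar>Arg z - Arg w\<bar>"
    using assms(3) by (intro cos_monotone_0_pi) auto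
  then have "cmod z * cmod w < 2 * Re (z * cnj w)"
    using assms(1,2) by (simp add: mult_cnj_eq_rcis cos_60)
  moreover have "(cmod (z - w))\<^sup>2 = (cmod z)\<^sup>2 + (cmod w)\<^sup>2 - 2 * Re (z * cnj w)"
    using cmod_add_square[of z "- w"] by simp
  moreover have "(cmod z)\<^sup>2 + (cmod w)\<^sup>2 - cmod z * cmod w \<le> (max (cmod z) (cmod w))\<^sup>2"
    by (auto simp: max_def power2_eq_square intro: mult_right_mono mult_left_mono)
  ultimately show "(cmod (z - w))\<^sup>2 < (max (cmod z) (cmod w))\<^sup>2"
    by linarith
qed (simp add: le_max_iff_disj)

lemma Re_mult_cnj_pos_if_Arg_close:
  assumes "b \<noteq> 0" "b' \<noteq> 0" "c \<noteq> 0" "c' \<noteq> 0"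
    and "\<bar>Arg b - Arg b'\<bar> + \<bar>Arg c - Arg c'\<bar> < pi / 2"
  shows "Re (b * c * cnj (b' * c')) > 0"
proof -
  have "b * c * cnj (b' * c') = (b * cnj b') * (c * cnj c')" by simp
  also have "\<dots> = rcis (cmod b * cmod b' * (cmod c * cmod c')) (Arg b - Arg b' + (Arg c - Arg c'))"
    by (simp add: mult_cnj_eq_rcis rcis_mult)
  finally have "Re (b * c * cnj (b' * c')) =
      cmod b * cmod b' * (cmod c * cmod c') * cos (Arg b - Arg b' + (Arg c - Arg c'))"
    by simp
  moreover have "cos (Arg b - Arg b' + (Arg c - Arg c')) > 0"
    by (intro cos_gt_zero_pi) (use assms(5) in arith)+
  ultimately show ?thesis using assms(1-4) by simp
qed

(* Arg z ranges over (-pi, pi], so sector 8 consists of the negative reals only. *)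
definition arg_sector :: "complex \<Rightarrow> nat" where
  "arg_sector z = nat \<lfloor>(Arg z + pi) / (pi / 4)\<rfloor>"

lemma arg_sector_le: "arg_sector z \<le> 8"
proof -
  have "(Arg z + pi) / (pi / 4) \<le> 8"
    using Arg_bounded[of z] by (simp add: field_simps)
  then show ?thesis unfolding arg_sector_def by linarith
qed

lemma Arg_diff_less_if_arg_sector_eq:
  assumes "arg_sector z = arg_sector w"
  shows "\<bar>Arg z - Arg w\<bar> < pi / 4"
proof -
  let ?x = "(Arg z + pi) / (pi / 4)" and ?y = "(Arg w + pi) / (pi / 4)"
  have "?x \<ge> 0" "?y \<ge> 0"
    using Arg_bounded[of z] Arg_bounded[of w] by auto
  then have "\<lfloor>?x\<rfloor> = \<lfloor>?y\<rfloor>"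
    using assms unfolding arg_sector_def by (metis nat_eq_iff2 zero_le_floor)
  then have "\<bar>?x - ?y\<bar> < 1" by linarith
  also have "?x - ?y = (Arg z - Arg w) / (pi / 4)"
    by (simp add: field_simps)
  finally show ?thesis
    by (metis abs_divide abs_of_pos divide_less_eq_1_pos pi_gt_zero zero_less_divide_iff
        zero_less_numeral)
qed

lemma card_le_10_if_closer_than_others:
  assumes "finite T"
    and closer: "\<And>l l'. l \<in> T \<Longrightarrow> l' \<in> T \<Longrightarrow> l \<noteq> l' \<Longrightarrow> cmod (\<sigma> - l) < cmod (l - l')"
  shows "card T \<le> 10"
proof -
  have "inj_on (\<lambda>l. arg_sector (l - \<sigma>)) (T - {\<sigma>})"
  proof (rule inj_onI, rule ccontr)
    fix l l' assume l: "l \<in> T - {\<sigma>}" and l': "l' \<in> T - {\<sigma>}" and "l \<noteq> l'"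
      and "arg_sector (l - \<sigma>) = arg_sector (l' - \<sigma>)"
    then have "\<bar>Arg (l - \<sigma>) - Arg (l' - \<sigma>)\<bar> < pi / 4"
      by (intro Arg_diff_less_if_arg_sector_eq)
    then have "\<bar>Arg (l - \<sigma>) - Arg (l' - \<sigma>)\<bar> < pi / 3"
      using pi_gt_zero by linarith
    then have "cmod ((l - \<sigma>) - (l' - \<sigma>)) < max (cmod (l - \<sigma>)) (cmod (l' - \<sigma>))"
      using l l' by (intro norm_diff_less_max_norm) auto
    moreover have "cmod (\<sigma> - l) < cmod (l - l')" "cmod (\<sigma> - l') < cmod (l' - l)"
      using closer l l' \<open>l \<noteq> l'\<close> by auto
    ultimately show False by (simp add: norm_minus_commute)
  qed
  moreover have "(\<lambda>l. arg_sector (l - \<sigma>)) ` (T - {\<sigma>}) \<subseteq> {..8}"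
    using arg_sector_le by auto
  ultimately have "card (T - {\<sigma>}) \<le> card {..8::nat}"
    by (intro card_inj_on_le) auto
  moreover have "card T \<le> card (T - {\<sigma>}) + 1"
    using assms(1) by (cases "\<sigma> \<in> T") (auto simp: card_Diff_singleton_if)
  ultimately show ?thesis by simp
qed

lemma two_point_combination_inj:
  fixes l m :: "'a::field"
  assumes "a = l * b" "a' = m * b'" "l \<noteq> m" "b \<noteq> 0" "b' \<noteq> 0"
    and "b * c1 + b' * c1' = b * c2 + b' * c2'" "a * c1 + a' * c1' = a * c2 + a' * c2'"
  shows "c1 = c2 \<and> c1' = c2'"
proof -
  have "(m - l) * b' * (c1' - c2') =
      (a * c1 + a' * c1' - (a * c2 + a' * c2')) - l * (b * c1 + b' * c1' - (b * c2 + b' * c2'))"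
    using assms(1,2) by (simp add: algebra_simps)
  then have "c1' = c2'" using assms(3-7) by simp
  then show ?thesis using assms(4,6) by simp
qed

lemma norm_weighted_quotient_diff_less:
  assumes "Re (z * cnj w) > 0" "l \<noteq> m"
  shows "cmod ((l * z + m * w) / (z + w) - l) < cmod (l - m)"
proof -
  have lt: "cmod w < cmod (z + w)" using assms(1) by (rule norm_less_norm_add)
  then have "z + w \<noteq> 0" by auto
  then have "(l * z + m * w) / (z + w) - l = (m - l) * (w / (z + w))"
    by (simp add: field_simps)
  also have "cmod \<dots> < cmod (m - l) * 1"
    unfolding norm_mult norm_divide using lt assms(2)
    by (intro mult_strict_left_mono) (simp_all add: divide_less_eq_1)
  finally show ?thesis by (simp add: norm_minus_commute)
qed

lemma finite_sumset: "finite X \<Longrightarrow> finite Y \<Longrightarrow> finite (sumset X Y)"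
  unfolding sumset_def by (rule finite_image_set2) simp_all

lemma finite_prodset: "finite X \<Longrightarrow> finite Y \<Longrightarrow> finite (prodset X Y)"
  unfolding prodset_def by (rule finite_image_set2) simp_all

lemma finite_quotset: "finite X \<Longrightarrow> finite Y \<Longrightarrow> finite (quotset X Y)"
  unfolding quotset_def by (rule finite_image_set2) simp_all

lemma card_sumset_prodset_mono:
  assumes "finite X'" "finite Y'" "X \<subseteq> X'" "Y \<subseteq> Y'"
  shows "card (sumset (prodset X Y) (prodset X Y)) \<le> card (sumset (prodset X' Y') (prodset X' Y'))"
proof (rule card_mono)
  show "finite (sumset (prodset X' Y') (prodset X' Y'))"
    using assms(1,2) by (intro finite_sumset finite_prodset)
  show "sumset (prodset X Y) (prodset X Y) \<subseteq> sumset (prodset X' Y') (prodset X' Y')"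
    using assms(3,4) unfolding sumset_def prodset_def by blast
qed

lemma card_le_card_sumset_prodset:
  assumes "finite X" "finite Y" "x \<in> X" "x \<noteq> 0" "y0 \<in> Y"
  shows "card Y \<le> card (sumset (prodset X Y) (prodset X Y))"
proof (rule card_inj_on_le)
  show "inj_on (\<lambda>y. x * y + x * y0) Y" using assms(4) by (auto simp: inj_on_def)
  show "(\<lambda>y. x * y + x * y0) ` Y \<subseteq> sumset (prodset X Y) (prodset X Y)"
    using assms(3,5) unfolding sumset_def prodset_def by blast
  show "finite (sumset (prodset X Y) (prodset X Y))"
    using assms(1,2) by (intro finite_sumset finite_prodset)
qed

lemma card_quotset_mult_sq_le_if_card_le_1:
  assumes "finite A" "finite B" "finite C" "0 \<notin> A" "0 \<notin> B" "card (quotset A B) \<le> 1"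
  shows "card (quotset A B) * card C ^ 2 \<le>
    card (sumset (prodset A C) (prodset A C)) * card (sumset (prodset B C) (prodset B C))"
proof (cases "quotset A B = {} \<or> C = {}")
  case False
  then obtain a b c where "a \<in> A" "b \<in> B" "c \<in> C" unfolding quotset_def by blast
  then have "card C * card C \<le>
      card (sumset (prodset A C) (prodset A C)) * card (sumset (prodset B C) (prodset B C))"
    using assms(1-5) by (intro mult_le_mono card_le_card_sumset_prodset) auto
  moreover have "card (quotset A B) * (card C * card C) \<le> 1 * (card C * card C)"
    using assms(6) by (rule mult_le_mono1)
  ultimately show ?thesis unfolding power2_eq_square by linarith
qed auto

definition neighbour_sums ::
    "(complex \<Rightarrow> complex) \<Rightarrow> (complex \<Rightarrow> complex) \<Rightarrow> (complex \<Rightarrow> complex) \<Rightarrow>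
      complex \<times> complex \<times> complex \<Rightarrow> complex \<times> complex" where
  "neighbour_sums a b N = (\<lambda>(l, c, c'). (b l * c + b (N l) * c', a l * c + a (N l) * c'))"

lemma neighbour_sums_in_sumsets:
  assumes "\<And>l. l \<in> L \<Longrightarrow> a l \<in> A" "\<And>l. l \<in> L \<Longrightarrow> b l \<in> B" "\<And>l. l \<in> L \<Longrightarrow> N l \<in> L"
  shows "neighbour_sums a b N ` (L \<times> C \<times> C) \<subseteq>
    sumset (prodset B C) (prodset B C) \<times> sumset (prodset A C) (prodset A C)"
  using assms unfolding neighbour_sums_def sumset_def prodset_def by fastforce

lemma neighbour_sums_eqD:
  assumes "a l = l * b l" "a (N l) = N l * b (N l)" "N l \<noteq> l" "b l \<noteq> 0" "b (N l) \<noteq> 0"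
    and "neighbour_sums a b N (l, c1, c1') = neighbour_sums a b N (l, c2, c2')"
  shows "c1 = c2 \<and> c1' = c2'"
  using assms(6)
  by (intro two_point_combination_inj[OF assms(1,2) assms(3)[symmetric] assms(4,5)])
    (simp_all add: neighbour_sums_def)

lemma norm_neighbour_sums_quotient_less:
  assumes "a l = l * b l" "a (N l) = N l * b (N l)" "N l \<noteq> l"
    and "Re (b l * c * cnj (b (N l) * c')) > 0"
    and "neighbour_sums a b N (l, c, c') = (X, Y)"
  shows "cmod (Y / X - l) < cmod (l - N l)"
proof -
  have X: "X = b l * c + b (N l) * c'" and Y: "Y = l * (b l * c) + N l * (b (N l) * c')"
    using assms(1,2,5) by (auto simp: neighbour_sums_def)
  show ?thesis
    unfolding X Y using assms(4) assms(3)[symmetric] by (rule norm_weighted_quotient_diff_less)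
qed

lemma card_fibre_neighbour_sums_le:
  fixes L C :: "complex set"
  assumes "finite L"
    and N: "\<And>l. l \<in> L \<Longrightarrow> N l \<in> L - {l}"
      "\<And>l l'. l \<in> L \<Longrightarrow> l' \<in> L - {l} \<Longrightarrow> cmod (l - N l) \<le> cmod (l - l')"
    and ab: "\<And>l. l \<in> L \<Longrightarrow> a l = l * b l" "\<And>l. l \<in> L \<Longrightarrow> b l \<noteq> 0"
    and acute: "\<And>l m c c'. l \<in> L \<Longrightarrow> m \<in> L \<Longrightarrow> c \<in> C \<Longrightarrow> c' \<in> C \<Longrightarrow>
      Re (b l * c * cnj (b m * c')) > 0"
  shows "card {x \<in> L \<times> C \<times> C. neighbour_sums a b N x = (X, Y)} \<le> 10"
proof -
  let ?fibre = "{x \<in> L \<times> C \<times> C. neighbour_sums a b N x = (X, Y)}"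
  define T where "T = {l \<in> L. cmod (Y / X - l) < cmod (l - N l)}"
  have "finite T" using assms(1) by (simp add: T_def)
  have "inj_on fst ?fibre"
  proof (rule inj_onI)
    fix x y assume x: "x \<in> ?fibre" and y: "y \<in> ?fibre" and "fst x = fst y"
    obtain l c1 c1' where x_eq: "x = (l, c1, c1')" by (cases x)
    obtain c2 c2' where y_eq: "y = (l, c2, c2')" using \<open>fst x = fst y\<close> x_eq by (cases y) auto
    have l: "l \<in> L" and m: "N l \<in> L" "N l \<noteq> l" using x x_eq N(1) by auto
    have "neighbour_sums a b N (l, c1, c1') = neighbour_sums a b N (l, c2, c2')"
      using x y by (simp add: x_eq y_eq)
    then have "c1 = c2 \<and> c1' = c2'"
      by (rule neighbour_sums_eqD[of a l b N, OF ab(1)[OF l] ab(1)[OF m(1)] m(2) ab(2)[OF l] ab(2)[OF m(1)]])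
    then show "x = y" by (simp add: x_eq y_eq)
  qed
  then have "card ?fibre = card (fst ` ?fibre)" by (rule card_image[symmetric])
  also have "\<dots> \<le> card T"
  proof (rule card_mono[OF \<open>finite T\<close>], rule subsetI)
    fix l assume "l \<in> fst ` ?fibre"
    then obtain c c' where l: "l \<in> L" and c: "c \<in> C" "c' \<in> C"
      and "neighbour_sums a b N (l, c, c') = (X, Y)"
      by auto
    moreover have m: "N l \<in> L" "N l \<noteq> l" using N(1)[OF l] by auto
    ultimately have "cmod (Y / X - l) < cmod (l - N l)"
      using ab(1)[OF l] ab(1)[OF m(1)] acute[OF l m(1) c]
      by (intro norm_neighbour_sums_quotient_less[of a l b N c c' X Y]) auto
    then show "l \<in> T" unfolding T_def using l by simp
  qed
  also have "\<dots> \<le> 10"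
  proof (rule card_le_10_if_closer_than_others[OF \<open>finite T\<close>])
    fix l l' assume "l \<in> T" "l' \<in> T" "l \<noteq> l'"
    then show "cmod (Y / X - l) < cmod (l - l')"
      unfolding T_def using N(2)[of l l'] by force
  qed
  finally show ?thesis .
qed

lemma card_quotset_mult_sq_le_if_acute:
  assumes "finite A" "finite B" "finite C" "0 \<notin> A" "0 \<notin> B"
    and acute: "\<And>b b' c c'. b \<in> B \<Longrightarrow> b' \<in> B \<Longrightarrow> c \<in> C \<Longrightarrow> c' \<in> C \<Longrightarrow>
      Re (b * c * cnj (b' * c')) > 0"
  shows "card (quotset A B) * card C ^ 2 \<le>
    10 * (card (sumset (prodset A C) (prodset A C)) * card (sumset (prodset B C) (prodset B C)))"
proof (cases "2 \<le> card (quotset A B)")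
  case False
  then show ?thesis using card_quotset_mult_sq_le_if_card_le_1[OF assms(1-5)] by fastforce
next
  case True
  define L where "L = quotset A B"
  define SA where "SA = sumset (prodset A C) (prodset A C)"
  define SB where "SB = sumset (prodset B C) (prodset B C)"
  have "finite L" unfolding L_def using assms(1,2) by (rule finite_quotset)
  have "\<forall>l\<in>L. \<exists>p\<in>A \<times> B. l = fst p / snd p" unfolding L_def quotset_def by auto
  then obtain r where r: "\<And>l. l \<in> L \<Longrightarrow> r l \<in> A \<times> B \<and> l = fst (r l) / snd (r l)"
    by metis
  define a where "a = fst \<circ> r"
  define b where "b = snd \<circ> r"
  have b: "b l \<in> B" "b l \<noteq> 0" if "l \<in> L" for l
    using r[OF that] assms(5) by (auto simp: b_def)
  have a: "a l \<in> A" "a l = l * b l" if "l \<in> L" for l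
    using r[OF that] b[OF that] by (auto simp: a_def b_def)
  obtain N where N: "\<And>l. l \<in> L \<Longrightarrow> N l \<in> L - {l}"
    "\<And>l l'. l \<in> L \<Longrightarrow> l' \<in> L - {l} \<Longrightarrow> cmod (l - N l) \<le> cmod (l - l')"
    using finite_nearest_neighbour[OF \<open>finite L\<close> True[folded L_def]] by (metis dist_norm)
  let ?D = "L \<times> C \<times> C"
  have "card ?D \<le> 10 * card (neighbour_sums a b N ` ?D)"
  proof (rule card_le_mult_card_image)
    show "finite ?D" using \<open>finite L\<close> assms(3) by simp
    show "card {x \<in> ?D. neighbour_sums a b N x = y} \<le> 10" for y
      using card_fibre_neighbour_sums_le[OF \<open>finite L\<close> N a(2) b(2) acute[OF b(1) b(1)]]
      by (cases y) auto
  qed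
  also have "\<dots> \<le> 10 * card (SB \<times> SA)"
  proof (intro mult_le_mono2 card_mono)
    show "finite (SB \<times> SA)"
      unfolding SA_def SB_def using assms(1-3)
      by (intro finite_cartesian_product finite_sumset finite_prodset)
    show "neighbour_sums a b N ` ?D \<subseteq> SB \<times> SA"
      unfolding SA_def SB_def using a(1) b(1) N(1) by (intro neighbour_sums_in_sumsets) auto
  qed
  finally show ?thesis
    unfolding L_def SA_def SB_def by (simp add: card_cartesian_product power2_eq_square ac_simps)
qed

lemma card_quotset_mult_sq_le:
  assumes "finite A" "finite B" "finite C" "0 \<notin> A" "0 \<notin> B" "0 \<notin> C"
  shows "card (quotset A B) * card C ^ 2 \<le>
    7290 * (card (sumset (prodset A C) (prodset A C)) * card (sumset (prodset B C) (prodset B C)))"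
proof -
  let ?B = "\<lambda>k. {b \<in> B. arg_sector b = k}" and ?C = "\<lambda>k. {c \<in> C. arg_sector c = k}"
  have "quotset A B \<subseteq> (\<Union>k\<in>{..8}. quotset A (?B k))"
    unfolding quotset_def using arg_sector_le by fastforce
  then have "\<exists>k\<in>{..8}. card (quotset A B) \<le> card {..8::nat} * card (quotset A (?B k))"
    using assms(1,2) by (intro pigeonhole_card_UN) (auto intro: finite_quotset)
  then obtain k where k: "card (quotset A B) \<le> 9 * card (quotset A (?B k))"
    by auto
  have "C \<subseteq> (\<Union>k\<in>{..8}. ?C k)" using arg_sector_le by auto
  then have "\<exists>j\<in>{..8}. card C \<le> card {..8::nat} * card (?C j)"
    using assms(3) by (intro pigeonhole_card_UN) auto
  then obtain j where j: "card C \<le> 9 * card (?C j)"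
    by auto
  have "card (quotset A (?B k)) * card (?C j) ^ 2 \<le>
    10 * (card (sumset (prodset A (?C j)) (prodset A (?C j))) *
      card (sumset (prodset (?B k) (?C j)) (prodset (?B k) (?C j))))"
  proof (rule card_quotset_mult_sq_le_if_acute)
    fix b b' c c' assume "b \<in> ?B k" "b' \<in> ?B k" "c \<in> ?C j" "c' \<in> ?C j"
    then have "arg_sector b = arg_sector b'" "arg_sector c = arg_sector c'" by simp_all
    then have "\<bar>Arg b - Arg b'\<bar> < pi / 4" "\<bar>Arg c - Arg c'\<bar> < pi / 4"
      using Arg_diff_less_if_arg_sector_eq by blast+
    then show "Re (b * c * cnj (b' * c')) > 0"
      using assms(5,6) \<open>b \<in> ?B k\<close> \<open>b' \<in> ?B k\<close> \<open>c \<in> ?C j\<close> \<open>c' \<in> ?C j\<close>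
      by (intro Re_mult_cnj_pos_if_Arg_close) auto
  qed (use assms in auto)
  also have "\<dots> \<le> 10 * (card (sumset (prodset A C) (prodset A C)) *
      card (sumset (prodset B C) (prodset B C)))"
    using assms(1-3) by (intro mult_le_mono2 mult_le_mono card_sumset_prodset_mono) auto
  moreover have "card (quotset A B) * card C ^ 2 \<le>
      729 * (card (quotset A (?B k)) * card (?C j) ^ 2)"
    using mult_le_mono[OF k power_mono[OF j, of 2]] by (simp add: power_mult_distrib)
  ultimately show ?thesis by linarith
qed

theorem lemma2:
  "\<exists>c::real. c > 0 \<and>
     (\<forall>A B C :: complex set.
        finite A \<and> finite B \<and> finite C \<and> A \<noteq> {} \<and> B \<noteq> {} \<and> C \<noteq> {} \<and>
        0 \<notin> A \<and> 0 \<notin> B \<and> 0 \<notin> C \<longrightarrow>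
        real (card (sumset (prodset A C) (prodset A C))) * real (card (sumset (prodset B C) (prodset B C)))
          \<ge> c * real (card (quotset A B)) * real (card C) ^ 2)"
proof (intro exI[of _ "1 / 7290"] conjI allI impI)
  fix A B C :: "complex set"
  assume "finite A \<and> finite B \<and> finite C \<and> A \<noteq> {} \<and> B \<noteq> {} \<and> C \<noteq> {} \<and>
    0 \<notin> A \<and> 0 \<notin> B \<and> 0 \<notin> C"
  then have "card (quotset A B) * card C ^ 2 \<le>
    7290 * (card (sumset (prodset A C) (prodset A C)) * card (sumset (prodset B C) (prodset B C)))"
    by (intro card_quotset_mult_sq_le) auto
  then have "real (card (quotset A B) * card C ^ 2) \<le>
    real (7290 * (card (sumset (prodset A C) (prodset A C)) * card (sumset (prodset B C) (prodset B C))))"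
    by (rule of_nat_mono)
  then show "real (card (sumset (prodset A C) (prodset A C))) * real (card (sumset (prodset B C) (prodset B C)))
      \<ge> 1 / 7290 * real (card (quotset A B)) * real (card C) ^ 2"
    by simp
qed simp

end
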